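(* Let $\tau:\mathcal{X}\to\mathcal{X}$ be a continuous map on a compact metric space $(\mathcal{X},d)$ having at least one fixed point. Then $\tau$ is mixing if and only if $\tau$ is an asymptotic deformation.
   Context: $\tau^n$ is the $n$-fold composition of $\tau$. $\tau$ is mixing if there is $x_*\in\mathcal{X}$ with $\lim_{n\to\infty}\tau^n(x)=x_*$ for all $x\in\mathcal{X}$. $\tau$ is an asymptotic deformation if for all $x,y\in\mathcal{X}$ the sequence $d(\tau^n(x),\tau^n(y))$ converges and $\lim_{n\to\infty}d(\tau^n(x),\tau^n(y))\neq d(x,y)$ whenever $x\neq y$. *)

theory Defs
  imports "HOL-Analysis.Analysis"
begin

text \<open>The compact metric space is a compact subset X of a metric-space type,
  with the induced metric dist. The map tau is considered on X only.\<close>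

definition mixing :: "'a::metric_space set \<Rightarrow> ('a \<Rightarrow> 'a) \<Rightarrow> bool" where
  "mixing X \<tau> \<longleftrightarrow> (\<exists>xs\<in>X. \<forall>x\<in>X. (\<lambda>n. (\<tau> ^^ n) x) \<longlonglongrightarrow> xs)"

definition asymptotic_deformation :: "'a::metric_space set \<Rightarrow> ('a \<Rightarrow> 'a) \<Rightarrow> bool" where
  "asymptotic_deformation X \<tau> \<longleftrightarrow>
     (\<forall>x\<in>X. \<forall>y\<in>X. convergent (\<lambda>n. dist ((\<tau> ^^ n) x) ((\<tau> ^^ n) y)) \<and>
        (x \<noteq> y \<longrightarrow> lim (\<lambda>n. dist ((\<tau> ^^ n) x) ((\<tau> ^^ n) y)) \<noteq> dist x y))"

end

theory Submission
  imports Defs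
begin

text \<open>Mixing forces all distances between orbits to tend to 0, so it is an asymptotic
  deformation. Conversely, let p be the fixed point and x \<in> X. The distances from
  \<tau>^n x to p = \<tau>^n p converge to some L. By continuity every limit point z of the orbit
  of x (one exists by compactness) has its whole orbit at distance exactly L from p, so
  the distance between the orbits of z and p converges to dist z p. Being an asymptotic
  deformation then forces z = p, hence L = 0, i.e. the orbit of x converges to p.\<close>

lemma funpow_fixpoint: "f p = p \<Longrightarrow> (f ^^ n) p = p"
  by (induction n) auto

lemma funpow_in: "f ` X \<subseteq> X \<Longrightarrow> x \<in> X \<Longrightarrow> (f ^^ n) x \<in> X"
  by (induction n) auto

lemma continuous_on_funpow:
  assumes "f ` X \<subseteq> X" and "continuous_on X f"
  shows "continuous_on X (f ^^ n)"
proof (induction n)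
  case 0
  then show ?case by (simp add: continuous_on_id)
next
  case (Suc n)
  have "(f ^^ n) ` X \<subseteq> X"
    using funpow_in[OF assms(1)] by blast
  then have "continuous_on X (f \<circ> (f ^^ n))"
    using Suc assms(2) by (blast intro: continuous_on_compose continuous_on_subset)
  then show ?case by simp
qed

lemma mixing_imp_asymptotic_deformation:
  assumes "mixing X \<tau>"
  shows "asymptotic_deformation X \<tau>"
  unfolding asymptotic_deformation_def
proof (intro ballI conjI impI)
  obtain xs where xs: "\<And>x. x \<in> X \<Longrightarrow> (\<lambda>n. (\<tau> ^^ n) x) \<longlonglongrightarrow> xs"
    using assms unfolding mixing_def by blast
  fix x y assume "x \<in> X" "y \<in> X"
  then have lim0: "(\<lambda>n. dist ((\<tau> ^^ n) x) ((\<tau> ^^ n) y)) \<longlonglongrightarrow> 0"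
    using tendsto_dist[OF xs xs] by fastforce
  then show "convergent (\<lambda>n. dist ((\<tau> ^^ n) x) ((\<tau> ^^ n) y))"
    by (auto simp: convergent_def)
  assume "x \<noteq> y"
  then show "lim (\<lambda>n. dist ((\<tau> ^^ n) x) ((\<tau> ^^ n) y)) \<noteq> dist x y"
    using limI[OF lim0] by simp
qed

lemma dist_funpow_limit_point_eq:
  assumes maps: "\<tau> ` X \<subseteq> X" and cont: "continuous_on X \<tau>" and x: "x \<in> X"
    and dist_lim: "(\<lambda>n. dist ((\<tau> ^^ n) x) p) \<longlonglongrightarrow> L"
    and z: "z \<in> X" and r: "strict_mono r" and sub_lim: "(\<lambda>k. (\<tau> ^^ r k) x) \<longlonglongrightarrow> z"
  shows "dist ((\<tau> ^^ m) z) p = L"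
proof (rule LIMSEQ_unique)
  have "(\<lambda>k. (\<tau> ^^ m) ((\<tau> ^^ r k) x)) \<longlonglongrightarrow> (\<tau> ^^ m) z"
    by (rule continuous_on_tendsto_compose[OF continuous_on_funpow[OF maps cont] sub_lim z])
       (simp add: funpow_in[OF maps x])
  then show "(\<lambda>k. dist ((\<tau> ^^ (m + r k)) x) p) \<longlonglongrightarrow> dist ((\<tau> ^^ m) z) p"
    by (intro tendsto_dist) (auto simp: funpow_add)
  have "(\<lambda>n. dist ((\<tau> ^^ (n + m)) x) p) \<longlonglongrightarrow> L"
    using LIMSEQ_ignore_initial_segment[OF dist_lim] .
  from LIMSEQ_subseq_LIMSEQ[OF this r]
  show "(\<lambda>k. dist ((\<tau> ^^ (m + r k)) x) p) \<longlonglongrightarrow> L"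
    by (simp add: o_def add.commute)
qed

lemma asymptotic_deformation_orbit_tendsto_fixpoint:
  assumes "compact X" and maps: "\<tau> ` X \<subseteq> X" and cont: "continuous_on X \<tau>"
    and ad: "asymptotic_deformation X \<tau>"
    and p: "p \<in> X" "\<tau> p = p" and x: "x \<in> X"
  shows "(\<lambda>n. (\<tau> ^^ n) x) \<longlonglongrightarrow> p"
proof -
  have "convergent (\<lambda>n. dist ((\<tau> ^^ n) x) ((\<tau> ^^ n) p))"
    using ad x p(1) unfolding asymptotic_deformation_def by blast
  then obtain L where dist_lim: "(\<lambda>n. dist ((\<tau> ^^ n) x) p) \<longlonglongrightarrow> L"
    by (auto simp: convergent_def funpow_fixpoint[of \<tau> p, OF p(2)])
  obtain z r where z: "z \<in> X" and r: "strict_mono r"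
    and sub_lim: "((\<lambda>n. (\<tau> ^^ n) x) \<circ> r) \<longlonglongrightarrow> z"
    using seq_compactE[OF compact_imp_seq_compact[OF \<open>compact X\<close>], of "\<lambda>n. (\<tau> ^^ n) x"]
      funpow_in[OF maps x] by blast
  have orbit_dist: "dist ((\<tau> ^^ m) z) ((\<tau> ^^ m) p) = L" for m
    using dist_funpow_limit_point_eq[OF maps cont x dist_lim z r] sub_lim
    by (simp add: o_def funpow_fixpoint[of \<tau> p, OF p(2)])
  then have "lim (\<lambda>n. dist ((\<tau> ^^ n) z) ((\<tau> ^^ n) p)) = L"
    by (simp add: limI)
  also have "L = dist z p"
    using orbit_dist[of 0] by simp
  finally have "lim (\<lambda>n. dist ((\<tau> ^^ n) z) ((\<tau> ^^ n) p)) = dist z p" .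
  then have "z = p"
    using ad z p(1) unfolding asymptotic_deformation_def by blast
  then have "(\<lambda>n. dist ((\<tau> ^^ n) x) p) \<longlonglongrightarrow> 0"
    using dist_lim orbit_dist[of 0] by simp
  then show ?thesis
    by (rule tendsto_dist_iff[THEN iffD2])
qed

theorem mainTheorem9:
  fixes X :: "'a::metric_space set" and \<tau> :: "'a \<Rightarrow> 'a"
  assumes "compact X"
    and "\<tau> ` X \<subseteq> X"
    and "continuous_on X \<tau>"
    and "\<exists>p\<in>X. \<tau> p = p"
  shows "mixing X \<tau> \<longleftrightarrow> asymptotic_deformation X \<tau>"
proof
  assume "mixing X \<tau>"
  then show "asymptotic_deformation X \<tau>"
    by (rule mixing_imp_asymptotic_deformation)
next
  assume ad: "asymptotic_deformation X \<tau>"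
  obtain p where "p \<in> X" "\<tau> p = p"
    using assms(4) by blast
  then show "mixing X \<tau>"
    unfolding mixing_def
    using asymptotic_deformation_orbit_tendsto_fixpoint[OF assms(1-3) ad] by blast
qed

end
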